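(* The PIR capacity of the star graph $S_N$ on $N$ vertices satisfies $\mathscr{C}(S_N)\ge \frac{2}{N}$.
   Context: The star graph $S_N$ has $N$ vertices (servers), one (server $N$) of degree $N-1$ and the others of degree $1$; there are $K=N-1$ files, file $W_i$ stored on leaf server $i$ and on server $N$. Graph-based PIR model: files are independent, each uniform on $\mathbb{F}_2^L$; a user wants $W_\theta$, $\theta$ uniform on $[K]$ and independent of the files; it sends queries $Q_1,\dots,Q_N$ (independent of the files); server $i$ answers $A_i$, a deterministic function of $Q_i$ and the files on it. Reliability: $W_\theta$ is determined by all answers and queries. Privacy: $H(\theta\mid Q_i,W_{S_i})=\log K$ for every $i$, $W_{S_i}$ being the files on server $i$. The rate is $L/\sum_i H(A_i)$; the PIR capacity is the supremum of rates over all schemes and file lengths $L$. *)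

theory Defs
  imports "HOL-Probability.Product_PMF"
begin

definition ent :: "'a pmf \<Rightarrow> real" where
  "ent p = - (\<Sum>x\<in>set_pmf p. pmf p x * log 2 (pmf p x))"

definition cond_ent :: "('c \<Rightarrow> 'a) \<Rightarrow> ('c \<Rightarrow> 'b) \<Rightarrow> 'c pmf \<Rightarrow> real" where
  "cond_ent f g p = ent (map_pmf (\<lambda>x. (f x, g x)) p) - ent (map_pmf g p)"

text \<open>Star graph S_N: servers 1..N, server N is the centre; files 1..K with K = N-1.
  File k is stored on leaf server k and on server N.\<close>
definition star_files :: "nat \<Rightarrow> nat" where
  "star_files N = N - 1"

definition star_storage :: "nat \<Rightarrow> nat \<Rightarrow> nat set" where
  "star_storage N i = (if i = N then {1..star_files N} else {i})"

definition file_pmf :: "nat \<Rightarrow> nat \<Rightarrow> (nat \<Rightarrow> bool list) pmf" where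
  "file_pmf K L = Pi_pmf {1..K} [] (\<lambda>_. pmf_of_set {xs. length xs = L})"

definition files_on :: "nat \<Rightarrow> nat \<Rightarrow> (nat \<Rightarrow> bool list) \<Rightarrow> (nat \<Rightarrow> bool list)" where
  "files_on N i W = (\<lambda>k. if k \<in> star_storage N i then W k else [])"

text \<open>A scheme: qd is the joint law of (theta, Q) with Q i the query to server i;
  ans i q V is the (deterministic) answer of server i to query q given its files V;
  dec is the user's decoder applied to all queries and all answers.
  The joint law of ((theta,Q),W) is qd \<times> files (queries independent of the files).\<close>
definition joint :: "nat \<Rightarrow> nat \<Rightarrow> (nat \<times> (nat \<Rightarrow> nat)) pmf \<Rightarrow> ((nat \<times> (nat \<Rightarrow> nat)) \<times> (nat \<Rightarrow> bool list)) pmf" where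
  "joint N L qd = pair_pmf qd (file_pmf (star_files N) L)"

definition answer :: "nat \<Rightarrow> (nat \<Rightarrow> nat \<Rightarrow> (nat \<Rightarrow> bool list) \<Rightarrow> nat) \<Rightarrow> nat \<Rightarrow> (nat \<Rightarrow> nat) \<Rightarrow> (nat \<Rightarrow> bool list) \<Rightarrow> nat" where
  "answer N ans i Q W = ans i (Q i) (files_on N i W)"

definition all_queries :: "nat \<Rightarrow> (nat \<Rightarrow> nat) \<Rightarrow> (nat \<Rightarrow> nat)" where
  "all_queries N Q = (\<lambda>i. if i \<in> {1..N} then Q i else 0)"

definition all_answers :: "nat \<Rightarrow> (nat \<Rightarrow> nat \<Rightarrow> (nat \<Rightarrow> bool list) \<Rightarrow> nat) \<Rightarrow> (nat \<Rightarrow> nat) \<Rightarrow> (nat \<Rightarrow> bool list) \<Rightarrow> (nat \<Rightarrow> nat)" where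
  "all_answers N ans Q W = (\<lambda>i. if i \<in> {1..N} then answer N ans i Q W else 0)"

definition valid_star_scheme ::
  "nat \<Rightarrow> nat \<Rightarrow> (nat \<times> (nat \<Rightarrow> nat)) pmf \<Rightarrow> (nat \<Rightarrow> nat \<Rightarrow> (nat \<Rightarrow> bool list) \<Rightarrow> nat)
     \<Rightarrow> ((nat \<Rightarrow> nat) \<Rightarrow> (nat \<Rightarrow> nat) \<Rightarrow> bool list) \<Rightarrow> bool" where
  "valid_star_scheme N L qd ans dec \<longleftrightarrow>
     finite (set_pmf qd) \<and>
     map_pmf fst qd = pmf_of_set {1..star_files N} \<and>
     (\<forall>((\<theta>, Q), W) \<in> set_pmf (joint N L qd).
        dec (all_queries N Q) (all_answers N ans Q W) = W \<theta>) \<and>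
     (\<forall>i\<in>{1..N}. cond_ent (\<lambda>((\<theta>, Q), W). \<theta>) (\<lambda>((\<theta>, Q), W). (Q i, files_on N i W)) (joint N L qd)
                    = log 2 (real (star_files N)))"

definition star_rate :: "nat \<Rightarrow> nat \<Rightarrow> (nat \<times> (nat \<Rightarrow> nat)) pmf \<Rightarrow> (nat \<Rightarrow> nat \<Rightarrow> (nat \<Rightarrow> bool list) \<Rightarrow> nat) \<Rightarrow> real" where
  "star_rate N L qd ans =
     real L / (\<Sum>i=1..N. ent (map_pmf (\<lambda>((\<theta>, Q), W). answer N ans i Q W) (joint N L qd)))"

definition star_pir_capacity :: "nat \<Rightarrow> ereal" where
  "star_pir_capacity N = Sup {ereal (star_rate N L qd ans) | L qd ans dec.
       L \<ge> 1 \<and> valid_star_scheme N L qd ans dec}"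

end

theory Submission
  imports Defs "HOL-Library.Nat_Bijection"
begin

text \<open>Every file is split into two bits. The user draws a uniformly random vector \<open>r\<close> of
  \<open>K\<close> bits; leaf \<open>j\<close> is asked for bit \<open>r j\<close> of \<open>W j\<close>, and the centre for the parity of the bits
  \<open>r' j\<close> of all \<open>W j\<close>, where \<open>r'\<close> is \<open>r\<close> with coordinate \<open>\<theta>\<close> flipped. Each server alone sees a
  uniformly distributed query (flipping one coordinate preserves the uniform law of \<open>r\<close>), so
  the scheme is private, and each answer is one uniform bit, so the download is \<open>N\<close> bits.
  Leaf \<open>\<theta>\<close> returns bit \<open>r \<theta>\<close> of \<open>W \<theta>\<close>; adding the other leaf answers to the centre's parity
  cancels every term except bit \<open>\<not> r \<theta>\<close> of \<open>W \<theta>\<close>. Two bits are retrieved: rate \<open>2/N\<close>.\<close>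

lemma ent_pmf_of_set:
  assumes "finite S" "S \<noteq> {}"
  shows "ent (pmf_of_set S) = log 2 (real (card S))"
proof -
  have c: "card S > 0" using assms by (simp add: card_gt_0_iff)
  have "ent (pmf_of_set S) = - (\<Sum>x\<in>S. (1 / real (card S)) * log 2 (1 / real (card S)))"
    unfolding ent_def using assms by (simp add: pmf_of_set)
  also have "\<dots> = - log 2 (1 / real (card S))" using c by simp
  also have "\<dots> = log 2 (real (card S))" using c by (simp add: log_divide)
  finally show ?thesis .
qed

lemma ent_pair_pmf:
  assumes "finite (set_pmf p)" "finite (set_pmf q)"
  shows "ent (pair_pmf p q) = ent p + ent q"
proof -
  have sp: "(\<Sum>x\<in>set_pmf p. pmf p x) = 1" and sq: "(\<Sum>x\<in>set_pmf q. pmf q x) = 1"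
    using assms sum_pmf_eq_1 by blast+
  have "(\<Sum>z\<in>set_pmf (pair_pmf p q). pmf (pair_pmf p q) z * log 2 (pmf (pair_pmf p q) z))
      = (\<Sum>a\<in>set_pmf p. \<Sum>b\<in>set_pmf q. pmf p a * pmf q b * (log 2 (pmf p a) + log 2 (pmf q b)))"
    unfolding set_pair_pmf sum.cartesian_product
    by (intro sum.cong refl) (auto simp: pmf_pair log_mult_pos pmf_positive)
  also have "\<dots> = (\<Sum>a\<in>set_pmf p. pmf p a * log 2 (pmf p a) * (\<Sum>b\<in>set_pmf q. pmf q b))
       + (\<Sum>a\<in>set_pmf p. pmf p a) * (\<Sum>b\<in>set_pmf q. pmf q b * log 2 (pmf q b))"
    by (simp add: algebra_simps sum.distrib sum_distrib_left sum_distrib_right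
        sum.swap[of _ "set_pmf q"])
  finally show ?thesis unfolding ent_def using sp sq by simp
qed

lemma cond_ent_eq_ent_if_indep:
  assumes indep: "map_pmf (\<lambda>x. (f x, g x)) p = pair_pmf A B"
    and fin: "finite (set_pmf A)" "finite (set_pmf B)"
  shows "cond_ent f g p = ent A"
proof -
  have "map_pmf g p = map_pmf snd (map_pmf (\<lambda>x. (f x, g x)) p)"
    by (simp add: map_pmf_comp)
  also have "\<dots> = B" unfolding indep map_snd_pair_pmf ..
  finally show ?thesis
    unfolding cond_ent_def indep ent_pair_pmf[OF fin] by simp
qed

lemma map_pmf_pair_pmf_indep:
  assumes "\<And>x. x \<in> set_pmf p \<Longrightarrow> map_pmf (g x) q = D"
  shows "map_pmf (\<lambda>(x, y). (x, g x y)) (pair_pmf p q) = pair_pmf p D"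
proof -
  have "map_pmf (\<lambda>(x, y). (x, g x y)) (pair_pmf p q)
      = bind_pmf p (\<lambda>x. map_pmf (Pair x) (map_pmf (g x) q))"
    unfolding pair_pmf_def map_bind_pmf by (simp add: map_pmf_def bind_return_pmf bind_assoc_pmf)
  also have "\<dots> = bind_pmf p (\<lambda>x. map_pmf (Pair x) D)"
    using assms by (intro bind_pmf_cong) auto
  also have "\<dots> = pair_pmf p D"
    unfolding pair_pmf_def by (simp add: map_pmf_def)
  finally show ?thesis .
qed

lemma map_pmf_pair_pmf_const:
  assumes "\<And>x. x \<in> set_pmf p \<Longrightarrow> map_pmf (g x) q = D"
  shows "map_pmf (\<lambda>(x, y). g x y) (pair_pmf p q) = D"
proof -
  have "map_pmf (\<lambda>(x, y). g x y) (pair_pmf p q)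
      = map_pmf snd (map_pmf (\<lambda>(x, y). (x, g x y)) (pair_pmf p q))"
    unfolding map_pmf_comp by (intro map_pmf_cong) auto
  also have "\<dots> = D"
    by (simp only: map_pmf_pair_pmf_indep[OF assms] map_snd_pair_pmf)
  finally show ?thesis .
qed

lemma pmf_of_set_01_if_flip_invariant:
  fixes D :: "nat pmf"
  assumes "set_pmf D \<subseteq> {0, 1}" "map_pmf (\<lambda>v. 1 - v) D = D"
  shows "D = pmf_of_set {0, 1}"
proof -
  have "pmf D 1 = pmf (map_pmf (\<lambda>v. 1 - v) D) 1" using assms by simp
  also have "\<dots> = measure D ((\<lambda>v. 1 - v) -` {1})" by (simp add: pmf_map)
  also have "(\<lambda>v::nat. 1 - v) -` {1} = {0}" by auto
  finally have same: "pmf D 1 = pmf D 0" by (simp add: measure_pmf_single)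
  have "(\<Sum>x\<in>{0, 1}. pmf D x) = 1" using assms by (intro sum_pmf_eq_1) auto
  then have total: "pmf D 0 + pmf D 1 = 1" by simp
  show ?thesis
  proof (rule pmf_eqI)
    fix x
    show "pmf D x = pmf (pmf_of_set {0, 1}) x"
    proof (cases "x \<in> {0, 1}")
      case True
      then show ?thesis using same total by (auto simp: pmf_of_set)
    next
      case False
      then have "x \<notin> set_pmf D" using assms by auto
      then show ?thesis using False by (simp add: set_pmf_iff pmf_of_set)
    qed
  qed
qed

lemma map_pmf_of_set_eq_uniform_bit:
  fixes g :: "'a \<Rightarrow> nat"
  assumes S: "finite S" "S \<noteq> {}"
    and \<sigma>: "\<sigma> ` S \<subseteq> S" "\<And>x. x \<in> S \<Longrightarrow> \<sigma> (\<sigma> x) = x"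
    and g: "\<And>x. x \<in> S \<Longrightarrow> g x \<in> {0, 1}" "\<And>x. x \<in> S \<Longrightarrow> g (\<sigma> x) = 1 - g x"
  shows "map_pmf g (pmf_of_set S) = pmf_of_set {0, 1}"
proof (rule pmf_of_set_01_if_flip_invariant)
  have "set_pmf (map_pmf g (pmf_of_set S)) = g ` S"
    using S by simp
  also have "\<dots> \<subseteq> {0, 1}"
    by (rule image_subsetI) (rule g(1))
  finally show "set_pmf (map_pmf g (pmf_of_set S)) \<subseteq> {0, 1}" .
  have "bij_betw \<sigma> S S"
    using \<sigma> by (intro bij_betw_byWitness[where f' = \<sigma>]) auto
  then have "map_pmf \<sigma> (pmf_of_set S) = pmf_of_set S"
    using S by (intro map_pmf_of_set_bij_betw)
  moreover have "map_pmf (\<lambda>v. 1 - v) (map_pmf g (pmf_of_set S)) = map_pmf g (map_pmf \<sigma> (pmf_of_set S))"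
    unfolding map_pmf_comp using S g(2) by (intro map_pmf_cong) auto
  ultimately show "map_pmf (\<lambda>v. 1 - v) (map_pmf g (pmf_of_set S)) = map_pmf g (pmf_of_set S)"
    by simp
qed

lemma of_bool_Not_add_mod_2: "(of_bool (\<not> b) + s) mod 2 = 1 - (of_bool b + s) mod (2::nat)"
  by (cases b) (auto simp: mod_Suc)

lemma add_mod_2_add_mod_2: "(b::nat) \<le> 1 \<Longrightarrow> ((b + s) mod 2 + s) mod 2 = b"
  by presburger

definition file_vectors :: "nat \<Rightarrow> nat \<Rightarrow> (nat \<Rightarrow> bool list) set" where
  "file_vectors K L = PiE_dflt {1..K} [] (\<lambda>_. {xs. length xs = L})"

lemma finite_file_vectors: "finite (file_vectors K L)"
  unfolding file_vectors_def using finite_lists_length_eq[of "UNIV :: bool set"]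
  by (intro finite_PiE_dflt) auto

lemma file_vectors_nonempty: "file_vectors K L \<noteq> {}"
  unfolding file_vectors_def by (auto intro: exI[of _ "replicate L False"])

lemma file_pmf_eq_pmf_of_set: "file_pmf K L = pmf_of_set (file_vectors K L)"
  unfolding file_pmf_def file_vectors_def
  using finite_lists_length_eq[of "UNIV :: bool set"]
  by (intro Pi_pmf_of_set) (auto intro: exI[of _ "replicate L False"])

lemma parity_of_selected_bits_uniform:
  assumes S: "finite S" "S \<subseteq> {1..K}" "k \<in> S" and c: "c k < L"
  shows "map_pmf (\<lambda>W. (\<Sum>j\<in>S. of_bool (W j ! c j) :: nat) mod 2) (pmf_of_set (file_vectors K L))
    = pmf_of_set {0, 1}"
proof -
  define \<sigma> where "\<sigma> W = W(k := (W k)[c k := \<not> W k ! c k])" for W :: "nat \<Rightarrow> bool list"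
  have k: "k \<in> {1..K}" using S by auto
  show ?thesis
  proof (rule map_pmf_of_set_eq_uniform_bit[of _ \<sigma>])
    show "finite (file_vectors K L)" "file_vectors K L \<noteq> {}"
      by (rule finite_file_vectors, rule file_vectors_nonempty)
    show "\<sigma> ` file_vectors K L \<subseteq> file_vectors K L"
      using k unfolding \<sigma>_def file_vectors_def PiE_dflt_def by auto
    fix W assume W: "W \<in> file_vectors K L"
    then have len: "length (W k) = L" using k unfolding file_vectors_def PiE_dflt_def by auto
    show "\<sigma> (\<sigma> W) = W"
      using len c unfolding \<sigma>_def by (intro ext) auto
    show "(\<Sum>j\<in>S. of_bool (W j ! c j) :: nat) mod 2 \<in> {0, 1}" by auto
    define rest where "rest V = (\<Sum>j\<in>S - {k}. of_bool (V j ! c j) :: nat)" for V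
    have sum_split: "(\<Sum>j\<in>S. of_bool (V j ! c j)) = of_bool (V k ! c k) + rest V" for V
      unfolding rest_def using S by (intro sum.remove) auto
    have "rest (\<sigma> W) = rest W"
      unfolding rest_def \<sigma>_def by (intro sum.cong) auto
    moreover have "\<sigma> W k ! c k = (\<not> W k ! c k)"
      using len c unfolding \<sigma>_def by simp
    ultimately show "(\<Sum>j\<in>S. of_bool (\<sigma> W j ! c j) :: nat) mod 2
        = 1 - (\<Sum>j\<in>S. of_bool (W j ! c j)) mod 2"
      unfolding sum_split by (simp add: of_bool_Not_add_mod_2)
  qed
qed

definition bit_vectors :: "nat \<Rightarrow> (nat \<Rightarrow> bool) set" where
  "bit_vectors K = PiE_dflt {1..K} False (\<lambda>_. UNIV)"

lemma finite_bit_vectors: "finite (bit_vectors K)"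
  unfolding bit_vectors_def by (intro finite_PiE_dflt) auto

lemma bit_vectors_nonempty: "bit_vectors K \<noteq> {}"
  unfolding bit_vectors_def by simp

definition flip_at :: "nat \<Rightarrow> (nat \<Rightarrow> bool) \<Rightarrow> nat \<Rightarrow> bool" where
  "flip_at a r = r(a := \<not> r a)"

lemma map_pmf_flip_at_bit_vectors:
  assumes "a \<in> {1..K}"
  shows "map_pmf (flip_at a) (pmf_of_set (bit_vectors K)) = pmf_of_set (bit_vectors K)"
proof (rule map_pmf_of_set_bij_betw)
  show "bij_betw (flip_at a) (bit_vectors K) (bit_vectors K)"
    using assms unfolding bit_vectors_def PiE_dflt_def flip_at_def
    by (intro bij_betw_byWitness[where f' = "flip_at a"]) (auto simp: flip_at_def)
qed (rule bit_vectors_nonempty, rule finite_bit_vectors)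

definition star_selection :: "nat \<Rightarrow> nat \<Rightarrow> (nat \<Rightarrow> bool) \<Rightarrow> nat \<Rightarrow> nat \<Rightarrow> bool" where
  "star_selection N \<theta> r i = (if i = N then flip_at \<theta> r else r)"

text \<open>Server \<open>i\<close> receives, coded by \<open>set_encode\<close>, the set of its files of which it must use
  bit 1 rather than bit 0.\<close>
definition star_queries :: "nat \<Rightarrow> nat \<Rightarrow> (nat \<Rightarrow> bool) \<Rightarrow> nat \<Rightarrow> nat" where
  "star_queries N \<theta> r i = set_encode {j \<in> star_storage N i. star_selection N \<theta> r i j}"

definition star_query_pmf :: "nat \<Rightarrow> (nat \<times> (nat \<Rightarrow> nat)) pmf" where
  "star_query_pmf N = map_pmf (\<lambda>(\<theta>, r). (\<theta>, star_queries N \<theta> r))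
     (pair_pmf (pmf_of_set {1..star_files N}) (pmf_of_set (bit_vectors (star_files N))))"

definition parity_answer :: "nat \<Rightarrow> nat \<Rightarrow> nat \<Rightarrow> (nat \<Rightarrow> bool list) \<Rightarrow> nat" where
  "parity_answer N i q V = (\<Sum>j\<in>star_storage N i. of_bool (V j ! of_bool (j \<in> set_decode q))) mod 2"

text \<open>The index \<open>\<theta>\<close> is the only file on which the centre's selection differs from its leaf's.\<close>
definition star_decoder :: "nat \<Rightarrow> (nat \<Rightarrow> nat) \<Rightarrow> (nat \<Rightarrow> nat) \<Rightarrow> bool list" where
  "star_decoder N Q A =
     (let asks = (\<lambda>i j. j \<in> set_decode (Q i));
          \<theta> = (LEAST j. j \<in> {1..star_files N} \<and> asks N j \<noteq> asks j j);
          b = A \<theta>;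
          b' = (A N + (\<Sum>j\<in>{1..star_files N} - {\<theta>}. A j)) mod 2
      in if asks \<theta> \<theta> then [b' = 1, b = 1] else [b = 1, b' = 1])"

lemma finite_star_storage: "finite (star_storage N i)"
  unfolding star_storage_def by simp

lemma star_storage_subset: "i \<in> {1..N} \<Longrightarrow> star_storage N i \<subseteq> {1..star_files N}"
  unfolding star_storage_def star_files_def by auto

lemma star_storage_nonempty: "N \<ge> 2 \<Longrightarrow> star_storage N i \<noteq> {}"
  unfolding star_storage_def star_files_def by auto

lemma set_decode_star_queries:
  "set_decode (star_queries N \<theta> r i) = {j \<in> star_storage N i. star_selection N \<theta> r i j}"
  unfolding star_queries_def using finite_star_storage by simp

lemma answer_parity_answer:
  "answer N (parity_answer N) i (star_queries N \<theta> r) W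
     = (\<Sum>j\<in>star_storage N i. of_bool (W j ! of_bool (star_selection N \<theta> r i j))) mod 2"
  unfolding answer_def parity_answer_def set_decode_star_queries files_on_def
  by (intro arg_cong[where f = "\<lambda>n. n mod 2"] sum.cong) auto

lemma star_query_pmf_support:
  assumes "N \<ge> 2" "(\<theta>, Q) \<in> set_pmf (star_query_pmf N)"
  obtains r where "\<theta> \<in> {1..star_files N}" "r \<in> bit_vectors (star_files N)" "Q = star_queries N \<theta> r"
  using assms finite_bit_vectors bit_vectors_nonempty
  unfolding star_query_pmf_def star_files_def by auto

lemma joint_star_query_pmf:
  "joint N L (star_query_pmf N) = map_pmf (\<lambda>(\<theta>, r, W). ((\<theta>, star_queries N \<theta> r), W))
     (pair_pmf (pmf_of_set {1..star_files N})
       (pair_pmf (pmf_of_set (bit_vectors (star_files N))) (pmf_of_set (file_vectors (star_files N) L))))"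
  unfolding joint_def star_query_pmf_def file_pmf_eq_pmf_of_set pair_map_pmf1 pair_pair_pmf map_pmf_comp
  by (intro map_pmf_cong) auto

lemma star_answer_uniform:
  assumes N: "N \<ge> 2" and i: "i \<in> {1..N}" and L: "L \<ge> 2"
  shows "map_pmf (\<lambda>((\<theta>, Q), W). answer N (parity_answer N) i Q W) (joint N L (star_query_pmf N))
    = pmf_of_set {0, 1}"
proof -
  have "map_pmf (\<lambda>((\<theta>, Q), W). answer N (parity_answer N) i Q W) (joint N L (star_query_pmf N))
    = map_pmf (\<lambda>(x, W). answer N (parity_answer N) i (snd x) W)
        (pair_pmf (star_query_pmf N) (pmf_of_set (file_vectors (star_files N) L)))"
    unfolding joint_def file_pmf_eq_pmf_of_set by (intro map_pmf_cong) auto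
  also have "\<dots> = pmf_of_set {0, 1}"
  proof (rule map_pmf_pair_pmf_const)
    fix x assume "x \<in> set_pmf (star_query_pmf N)"
    then obtain \<theta> r where Q: "snd x = star_queries N \<theta> r"
      using star_query_pmf_support[OF N] by (metis prod.collapse)
    obtain k where "k \<in> star_storage N i"
      using star_storage_nonempty[OF N] by blast
    then show "map_pmf (\<lambda>W. answer N (parity_answer N) i (snd x) W)
        (pmf_of_set (file_vectors (star_files N) L)) = pmf_of_set {0, 1}"
      unfolding Q answer_parity_answer using L
      by (intro parity_of_selected_bits_uniform finite_star_storage star_storage_subset[OF i]) auto
  qed
  finally show ?thesis .
qed

lemma star_privacy:
  assumes "N \<ge> 2"
  shows "cond_ent (\<lambda>((\<theta>, Q), W). \<theta>) (\<lambda>((\<theta>, Q), W). (Q i, files_on N i W)) (joint N L (star_query_pmf N))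
    = log 2 (real (star_files N))"
proof -
  define K where "K = star_files N"
  define U where "U = pmf_of_set {1..K}"
  define R where "R = pmf_of_set (bit_vectors K)"
  define F where "F = pmf_of_set (file_vectors K L)"
  define D where "D = map_pmf (\<lambda>(r, W). (set_encode {j \<in> star_storage N i. r j}, files_on N i W)) (pair_pmf R F)"
  have K: "{1..K} \<noteq> {}" using assms unfolding K_def star_files_def by simp
  have "map_pmf (\<lambda>x. ((\<lambda>((\<theta>, Q), W). \<theta>) x, (\<lambda>((\<theta>, Q), W). (Q i, files_on N i W)) x))
      (joint N L (star_query_pmf N))
    = map_pmf (\<lambda>(\<theta>, rW). (\<theta>, (\<lambda>(r, W). (star_queries N \<theta> r i, files_on N i W)) rW)) (pair_pmf U (pair_pmf R F))"
    unfolding joint_star_query_pmf map_pmf_comp U_def R_def F_def K_def by (intro map_pmf_cong) auto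
  also have "\<dots> = pair_pmf U D"
  proof (rule map_pmf_pair_pmf_indep)
    fix \<theta> assume "\<theta> \<in> set_pmf U"
    then have "\<theta> \<in> {1..K}" using K unfolding U_def by simp
    then have sel: "map_pmf (\<lambda>r. star_selection N \<theta> r i) R = R"
      unfolding star_selection_def R_def
      by (cases "i = N") (simp_all add: map_pmf_flip_at_bit_vectors map_pmf_ident)
    have "map_pmf (\<lambda>(r, W). (star_queries N \<theta> r i, files_on N i W)) (pair_pmf R F)
      = map_pmf (\<lambda>(r, W). (set_encode {j \<in> star_storage N i. r j}, files_on N i W))
          (pair_pmf (map_pmf (\<lambda>r. star_selection N \<theta> r i) R) F)"
      unfolding pair_map_pmf1 map_pmf_comp star_queries_def by (intro map_pmf_cong) auto
    then show "map_pmf (\<lambda>(r, W). (star_queries N \<theta> r i, files_on N i W)) (pair_pmf R F) = D"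
      unfolding sel D_def .
  qed
  finally have "cond_ent (\<lambda>((\<theta>, Q), W). \<theta>) (\<lambda>((\<theta>, Q), W). (Q i, files_on N i W))
      (joint N L (star_query_pmf N)) = ent U"
    by (rule cond_ent_eq_ent_if_indep)
       (use K in \<open>simp_all add: U_def D_def R_def F_def finite_bit_vectors finite_file_vectors
          bit_vectors_nonempty file_vectors_nonempty\<close>)
  then show ?thesis
    using K unfolding U_def K_def by (simp add: ent_pmf_of_set)
qed

lemma star_decoder_correct:
  assumes N: "N \<ge> 2" and \<theta>: "\<theta> \<in> {1..star_files N}"
    and W: "W \<in> file_vectors (star_files N) 2"
  shows "star_decoder N (all_queries N (star_queries N \<theta> r))
      (all_answers N (parity_answer N) (star_queries N \<theta> r) W) = W \<theta>"
proof -
  define K where "K = star_files N"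
  define Q where "Q = all_queries N (star_queries N \<theta> r)"
  define A where "A = all_answers N (parity_answer N) (star_queries N \<theta> r) W"
  define bit where "bit j b = (of_bool (W j ! of_bool b) :: nat)" for j b
  have \<theta>K: "\<theta> \<in> {1..K}" using \<theta> unfolding K_def .
  have leaf: "j \<noteq> N" "j \<in> {1..N}" if "j \<in> {1..K}" for j
    using that unfolding K_def star_files_def by auto
  have asks_leaf: "j \<in> set_decode (Q j) \<longleftrightarrow> r j" if "j \<in> {1..K}" for j
    using leaf[OF that]
    by (simp add: Q_def all_queries_def set_decode_star_queries star_storage_def star_selection_def)
  have asks_centre: "j \<in> set_decode (Q N) \<longleftrightarrow> flip_at \<theta> r j" if "j \<in> {1..K}" for j
    using that N
    by (simp add: Q_def all_queries_def set_decode_star_queries star_storage_def star_selection_def K_def)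
  have \<theta>_found: "(LEAST j. j \<in> {1..K} \<and> (j \<in> set_decode (Q N)) \<noteq> (j \<in> set_decode (Q j))) = \<theta>"
    by (rule Least_equality) (use \<theta>K in \<open>auto simp: asks_leaf asks_centre flip_at_def split: if_splits\<close>)
  have A_leaf: "A j = bit j (r j)" if "j \<in> {1..K}" for j
    using leaf[OF that]
    by (simp add: A_def all_answers_def answer_parity_answer star_storage_def star_selection_def bit_def)
  have A_centre: "A N = (bit \<theta> (\<not> r \<theta>) + (\<Sum>j\<in>{1..K} - {\<theta>}. A j)) mod 2"
  proof -
    have "A N = (\<Sum>j\<in>{1..K}. bit j (flip_at \<theta> r j)) mod 2"
      using N by (simp add: A_def all_answers_def answer_parity_answer star_storage_def
          star_selection_def bit_def K_def)
    also have "(\<Sum>j\<in>{1..K}. bit j (flip_at \<theta> r j))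
        = bit \<theta> (flip_at \<theta> r \<theta>) + (\<Sum>j\<in>{1..K} - {\<theta>}. bit j (flip_at \<theta> r j))"
      using \<theta>K by (intro sum.remove) auto
    also have "(\<Sum>j\<in>{1..K} - {\<theta>}. bit j (flip_at \<theta> r j)) = (\<Sum>j\<in>{1..K} - {\<theta>}. A j)"
      by (intro sum.cong) (auto simp: A_leaf flip_at_def)
    finally show ?thesis by (simp add: flip_at_def)
  qed
  have other_bit: "(A N + (\<Sum>j\<in>{1..K} - {\<theta>}. A j)) mod 2 = bit \<theta> (\<not> r \<theta>)"
    unfolding A_centre by (rule add_mod_2_add_mod_2) (simp add: bit_def)
  have "length (W \<theta>) = 2"
    using W \<theta>K unfolding file_vectors_def PiE_dflt_def K_def by auto
  then obtain x y where xy: "W \<theta> = [x, y]"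
    by (auto simp: length_Suc_conv numeral_2_eq_2)
  show ?thesis
    unfolding star_decoder_def Let_def K_def[symmetric] Q_def[symmetric] A_def[symmetric]
      \<theta>_found other_bit A_leaf[OF \<theta>K] asks_leaf[OF \<theta>K]
    using xy by (simp add: bit_def)
qed

lemma valid_star_scheme_parity:
  assumes N: "N \<ge> 2"
  shows "valid_star_scheme N 2 (star_query_pmf N) (parity_answer N) (star_decoder N)"
proof -
  have "finite (set_pmf (star_query_pmf N))"
    unfolding star_query_pmf_def using N finite_bit_vectors bit_vectors_nonempty
    by (simp add: star_files_def)
  moreover have "map_pmf fst (star_query_pmf N) = pmf_of_set {1..star_files N}"
    unfolding star_query_pmf_def map_pmf_comp by (simp add: case_prod_beta map_fst_pair_pmf)
  moreover have "star_decoder N (all_queries N Q) (all_answers N (parity_answer N) Q W) = W \<theta>"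
    if "((\<theta>, Q), W) \<in> set_pmf (joint N 2 (star_query_pmf N))" for \<theta> Q W
  proof -
    have \<theta>Q: "(\<theta>, Q) \<in> set_pmf (star_query_pmf N)" and W: "W \<in> file_vectors (star_files N) 2"
      using that unfolding joint_def file_pmf_eq_pmf_of_set set_pair_pmf
        set_pmf_of_set[OF file_vectors_nonempty finite_file_vectors] by auto
    obtain r where "\<theta> \<in> {1..star_files N}" "r \<in> bit_vectors (star_files N)" "Q = star_queries N \<theta> r"
      by (rule star_query_pmf_support[OF N \<theta>Q])
    then show ?thesis
      using star_decoder_correct[OF N _ W] by simp
  qed
  ultimately show ?thesis
    unfolding valid_star_scheme_def using star_privacy[OF N] by auto
qed

lemma star_rate_parity:
  assumes "N \<ge> 2"
  shows "star_rate N 2 (star_query_pmf N) (parity_answer N) = 2 / real N"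
proof -
  have "ent (map_pmf (\<lambda>((\<theta>, Q), W). answer N (parity_answer N) i Q W) (joint N 2 (star_query_pmf N))) = 1"
    if "i \<in> {1..N}" for i
    unfolding star_answer_uniform[OF assms that order.refl] by (simp add: ent_pmf_of_set)
  then show ?thesis
    unfolding star_rate_def by simp
qed

theorem theorem5:
  fixes N :: nat
  assumes "N \<ge> 2"
  shows "star_pir_capacity N \<ge> ereal (2 / real N)"
proof -
  have "ereal (star_rate N 2 (star_query_pmf N) (parity_answer N))
      \<in> {ereal (star_rate N L qd ans) | L qd ans dec. L \<ge> 1 \<and> valid_star_scheme N L qd ans dec}"
    using valid_star_scheme_parity[OF assms] by fastforce
  then show ?thesis
    unfolding star_pir_capacity_def star_rate_parity[OF assms] by (rule Sup_upper)
qed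

end
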